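(* In the setting below, let $i\in\{1,\dots,\overline M\}$ with $\overline S_i=S_a\times\{b\}$ and put $\overline\tau^\varepsilon_i:=\tau^\varepsilon_{ab}$. For every bounded continuous $f:[0,\infty)\to\mathbb R$, $$\lim_{\varepsilon\downarrow0}\Big(\mathbb E f\Big(\frac{\overline T^\varepsilon(\bar x_1,\overline S_{j_1})}{\overline\tau^\varepsilon_i}\Big)-\mathbb E f\Big(\frac{\overline T^\varepsilon(\bar x_2,\overline S_{j_2})}{\overline\tau^\varepsilon_i}\Big)\Big)=0$$ uniformly in $\bar x_1,\bar x_2\in\overline S_i$ and $j_1,j_2\in\{1,\dots,\overline M\}$ with $\overline P^\varepsilon_{ij_1},\overline P^\varepsilon_{ij_2}>0$.
   Context: $S$ is a metric space partitioned into disjoint Borel sets $S_1,\dots,S_M$; for $\varepsilon>0$, $Q^\varepsilon$ is a Markov kernel from $S$ to $S\times[0,\infty)$, $P^\varepsilon(x,B)=Q^\varepsilon(x,B\times[0,\infty))$, and for $P^\varepsilon(x,B)>0$, $T^\varepsilon(x,B)$ has law $\mathbb P(T^\varepsilon(x,B)\le t)=Q^\varepsilon(x,B\times[0,t])/P^\varepsilon(x,B)$. Assumptions: $P^\varepsilon(x,S_i)=0$ for $x\in S_i$; for $i\ne j$, either $P^\varepsilon(x,S_j)=0$ for all $x\in S_i,\varepsilon$ (set $P^\varepsilon_{ij}\equiv0$) or it is positive for all $x\in S_i,\varepsilon$ and there are positive $P^\varepsilon_{ij}$ with $P^\varepsilon(x,S_j)/P^\varepsilon_{ij}\to1$ uniformly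 in $x\in S_i$; for $P^\varepsilon_{ij}\not\equiv0$ there are positive $\tau^\varepsilon_{ij}$ with $\mathbb ET^\varepsilon(x,S_j)/\tau^\varepsilon_{ij}\to1$ uniformly in $x\in S_i$; for every bounded continuous $f$ and $P^\varepsilon_{ij}\not\equiv0$, $\mathbb E f(T^\varepsilon(x_1,S_j)/\tau^\varepsilon_{ij})-\mathbb E f(T^\varepsilon(x_2,S_j)/\tau^\varepsilon_{ij})\to0$ uniformly in $x_1,x_2\in S_i$. Extended process: $\overline S=\{(x,j):x\in S_i,\ P^\varepsilon_{ij}\not\equiv0\}$ with kernel $\overline Q^\varepsilon((x,j),(A\times\{k\})\times I)=\frac{1}{P^\varepsilon(x,S_j)}\int_{A\cap S_j}P^\varepsilon(y,S_k)Q^\varepsilon(x,dy\times I)$; $\overline S$ is partitioned into sets $S_a\times\{b\}$ with $P^\varepsilon_{ab}\not\equiv0$, re-indexed $\overline S_1,\dots,\overline S_{\overline M}$; $\overline P^\varepsilon(\bar x,B)=\overline Q^\varepsilon(\bar x,B\times[0,\infty))$; $\overline T^\varepsilon(\bar x,B)$ has law $\overline Q^\varepsilon(\bar x,B\times\cdot)/\overline P^\varepsilon(\bar x,B)$. If $\overline S_i=S_a\times\{b\}$, $\overline S_j=S_c\times\{d\}$, then $\overline P^\varepsilon_{ij}=P^\varepsilon_{cd}$ if $b=c$ and $\equiv0$ otherwise. *)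

theory Defs
  imports "HOL-Probability.Probability"
begin

text \<open>A kernel from a state space to (state) x [0,oo) is represented as
  Q :: real => 's => ('s * real) measure (first argument: epsilon).\<close>

definition Pk :: "(real \<Rightarrow> 's \<Rightarrow> ('s \<times> real) measure) \<Rightarrow> real \<Rightarrow> 's \<Rightarrow> 's set \<Rightarrow> real" where
  "Pk Q e x B = measure (Q e x) (B \<times> {0..})"

text \<open>E g(T^eps(x,B)), where T^eps(x,B) has law Q^eps(x, B x .)/P^eps(x,B) on [0,oo).\<close>
definition ET :: "(real \<Rightarrow> 's \<Rightarrow> ('s \<times> real) measure) \<Rightarrow> real \<Rightarrow> 's \<Rightarrow> 's set
    \<Rightarrow> (real \<Rightarrow> real) \<Rightarrow> real" where
  "ET Q e x B g = (\<integral>z. indicator (B \<times> {0..}) z * g (snd z) \<partial>(Q e x)) / Pk Q e x B"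

definition conn :: "(real \<Rightarrow> nat \<Rightarrow> nat \<Rightarrow> real) \<Rightarrow> nat \<Rightarrow> nat \<Rightarrow> bool" where
  "conn Pij i j \<longleftrightarrow> \<not> (\<forall>e>0. Pij e i j = 0)"

definition Qbar :: "nat \<Rightarrow> (nat \<Rightarrow> 'a::topological_space set)
    \<Rightarrow> (real \<Rightarrow> 'a \<Rightarrow> ('a \<times> real) measure)
    \<Rightarrow> real \<Rightarrow> ('a \<times> nat) \<Rightarrow> (('a \<times> nat) \<times> real) measure" where
  "Qbar M S Q e xj = (case xj of (x, j) \<Rightarrow>
     measure_of UNIV (sets borel)
       (\<lambda>E. ennreal (1 / Pk Q e x (S j)) *
          (\<integral>\<^sup>+ z. indicator (S j) (fst z) *
              (\<Sum>k\<in>{1..M}. ennreal (Pk Q e (fst z) (S k)) * indicator E ((fst z, k), snd z))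
           \<partial>(Q e x))))"

definition Pbar :: "(real \<Rightarrow> nat \<Rightarrow> nat \<Rightarrow> real) \<Rightarrow> real \<Rightarrow> nat \<times> nat \<Rightarrow> nat \<times> nat \<Rightarrow> real" where
  "Pbar Pij e i j = (if snd i = fst j then Pij e (fst j) (snd j) else 0)"

definition Sbar :: "(nat \<Rightarrow> 'a set) \<Rightarrow> nat \<times> nat \<Rightarrow> ('a \<times> nat) set" where
  "Sbar S i = S (fst i) \<times> {snd i}"

definition Sbar_idx :: "nat \<Rightarrow> (real \<Rightarrow> nat \<Rightarrow> nat \<Rightarrow> real) \<Rightarrow> (nat \<times> nat) set" where
  "Sbar_idx M Pij = {(a, b). a \<in> {1..M} \<and> b \<in> {1..M} \<and> conn Pij a b}"

end

theory Submission
  imports Defs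
begin

(* Started at (x, b) with x in S_a, the extended chain enters S_b x {d} according to the law of
   the original transition into S_b, reweighted by y |-> P^eps(y, S_d) at the landing point y.
   As P^eps(y, S_d) / P^eps_bd -> 1 uniformly on S_b, the weight is asymptotically constant,
   so the expectation of f(Tbar / tau) differs from that of f(T^eps(x, S_b) / tau) by at most
   4 eta sup|f|, where eta is the relative error of the weight.  The assumed asymptotic
   independence of the law of T^eps(x, S_b) / tau^eps_ab from x in S_a concludes. *)

lemma abs_ratio_diff_le:
  fixes m p \<eta> K D N I :: real
  assumes m: "0 < m" and p: "0 < p" and \<eta>: "0 \<le> \<eta>" "\<eta> \<le> 1/2" and K: "0 \<le> K"
    and D: "\<bar>D - p * m\<bar> \<le> \<eta> * p * m" and N: "\<bar>N - p * I\<bar> \<le> \<eta> * p * K * m"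
    and I: "\<bar>I\<bar> \<le> K * m"
  shows "\<bar>N / D - I / m\<bar> \<le> 4 * \<eta> * K"
proof -
  have "\<eta> * (p * m) \<le> 1/2 * (p * m)"
    using \<eta> m p by (intro mult_right_mono) auto
  then have D_ge: "p * m / 2 \<le> D"
    using D by (simp add: abs_le_iff mult.assoc)
  then have "0 < D"
    using mult_pos_pos[OF p m] by linarith
  then have Dm: "0 < D * m"
    using m by simp
  have "\<bar>(N - p * I) * m + I * (p * m - D)\<bar> \<le> \<bar>N - p * I\<bar> * m + \<bar>I\<bar> * \<bar>p * m - D\<bar>"
    using abs_triangle_ineq[of "(N - p * I) * m" "I * (p * m - D)"] m by (simp add: abs_mult)
  also have "\<dots> \<le> (\<eta> * p * K * m) * m + (K * m) * (\<eta> * p * m)"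
    using D N I m K \<eta> p by (intro add_mono mult_mono) (auto simp: abs_minus_commute)
  also have "\<dots> = (4 * \<eta> * K) * ((p * m / 2) * m)"
    by (simp add: algebra_simps)
  also have "\<dots> \<le> (4 * \<eta> * K) * (D * m)"
    using D_ge m \<eta> K by (intro mult_left_mono mult_right_mono) auto
  finally have "\<bar>(N - p * I) * m + I * (p * m - D)\<bar> \<le> (4 * \<eta> * K) * (D * m)" .
  moreover have "N / D - I / m = ((N - p * I) * m + I * (p * m - D)) / (D * m)"
    using \<open>0 < D\<close> m by (simp add: field_simps)
  ultimately show ?thesis
    using Dm by (simp add: abs_divide pos_divide_le_eq)
qed

lemma (in finite_measure) abs_integral_indicator_le:
  fixes u :: "'a \<Rightarrow> real"
  assumes A: "A \<in> sets M" and u: "integrable M (\<lambda>x. indicator A x * u x)"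
    and bound: "\<And>x. x \<in> A \<Longrightarrow> \<bar>u x\<bar> \<le> c"
  shows "\<bar>\<integral>x. indicator A x * u x \<partial>M\<bar> \<le> c * measure M A"
proof -
  have c: "integrable M (\<lambda>x. c * indicator A x)"
    using A by (intro integrable_mult_right integrable_const_bound[where B=1]) (auto simp: indicator_def)
  have "\<bar>\<integral>x. indicator A x * u x \<partial>M\<bar> \<le> (\<integral>x. c * indicator A x \<partial>M)"
    using integral_mono[OF u c] integral_mono[OF integrable_minus[OF u] c] bound
    by (force simp: abs_le_iff indicator_def)
  also have "\<dots> = c * measure M A"
    using sets.sets_into_space[OF A] by (simp add: Int_absorb2)
  finally show ?thesis .
qed

lemma (in finite_measure) weighted_average_close:
  fixes w h :: "'a \<Rightarrow> real"
  assumes A: "A \<in> sets M" "0 < measure M A"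
    and w: "w \<in> borel_measurable M" and h: "(\<lambda>x. indicator A x * h x) \<in> borel_measurable M"
    and p: "0 < p" and \<eta>: "0 \<le> \<eta>" "\<eta> \<le> 1/2"
    and w_close: "\<And>x. x \<in> A \<Longrightarrow> \<bar>w x - p\<bar> \<le> \<eta> * p"
    and h_bound: "\<And>x. x \<in> A \<Longrightarrow> \<bar>h x\<bar> \<le> K"
  shows "\<bar>(\<integral>x. indicator A x * w x * h x \<partial>M) / (\<integral>x. indicator A x * w x \<partial>M)
          - (\<integral>x. indicator A x * h x \<partial>M) / measure M A\<bar> \<le> 4 * \<eta> * K"
proof -
  obtain x0 where "x0 \<in> A"
    using A(2) by (metis ex_in_conv measure_empty less_irrefl)
  then have K: "0 \<le> K"
    using h_bound[of x0] by linarith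
  have "\<eta> * p \<le> 1 * p"
    using \<eta> p by (intro mult_right_mono) auto
  then have w_bound: "\<bar>w x\<bar> \<le> 2 * p" if "x \<in> A" for x
    using w_close[OF that] p unfolding abs_le_iff by linarith
  have int_A: "integrable M (\<lambda>x. indicator A x :: real)"
    using A(1) by (intro integrable_const_bound[where B=1]) (auto simp: indicator_def)
  have int_w: "integrable M (\<lambda>x. indicator A x * w x)"
    using A(1) w w_bound p by (intro integrable_const_bound[where B="2 * p"]) (auto simp: indicator_def)
  have int_h: "integrable M (\<lambda>x. indicator A x * h x)"
    using h h_bound K by (intro integrable_const_bound[where B=K]) (auto simp: indicator_def)
  have "(\<lambda>x. w x * (indicator A x * h x)) \<in> borel_measurable M"
    using w h by measurable
  then have int_wh: "integrable M (\<lambda>x. indicator A x * w x * h x)"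
    using w_bound h_bound K p
    by (intro integrable_const_bound[where B="2 * p * K"])
      (auto simp: indicator_def abs_mult mult_ac intro!: mult_mono)
  have "\<bar>\<integral>x. indicator A x * (w x - p) \<partial>M\<bar> \<le> \<eta> * p * measure M A"
    using int_w int_A w_close
    by (intro abs_integral_indicator_le A(1)) (simp_all add: right_diff_distrib)
  then have D: "\<bar>(\<integral>x. indicator A x * w x \<partial>M) - p * measure M A\<bar> \<le> \<eta> * p * measure M A"
    using int_w int_A sets.sets_into_space[OF A(1)] by (simp add: right_diff_distrib Int_absorb2 mult_ac)
  have "\<bar>w x * h x - p * h x\<bar> \<le> \<eta> * p * K" if "x \<in> A" for x
  proof -
    have "\<bar>w x * h x - p * h x\<bar> = \<bar>w x - p\<bar> * \<bar>h x\<bar>"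
      by (simp add: abs_mult[symmetric] left_diff_distrib)
    also have "\<dots> \<le> (\<eta> * p) * K"
      using w_close[OF that] h_bound[OF that] \<eta> p by (intro mult_mono) auto
    finally show ?thesis .
  qed
  then have "\<bar>\<integral>x. indicator A x * (w x * h x - p * h x) \<partial>M\<bar> \<le> \<eta> * p * K * measure M A"
    using int_wh int_h
    by (intro abs_integral_indicator_le A(1)) (simp_all add: right_diff_distrib mult_ac)
  then have N: "\<bar>(\<integral>x. indicator A x * w x * h x \<partial>M) - p * (\<integral>x. indicator A x * h x \<partial>M)\<bar>
      \<le> \<eta> * p * K * measure M A"
    using int_wh int_h by (simp add: right_diff_distrib mult_ac)
  show ?thesis
    using abs_ratio_diff_le[OF A(2) p \<eta> K D N abs_integral_indicator_le[OF A(1) int_h h_bound]] .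
qed

lemma eventually_uniform_close_via_common_approximant:
  fixes A :: "'e \<Rightarrow> 'x \<Rightarrow> 'j \<Rightarrow> real" and B :: "'e \<Rightarrow> 'x \<Rightarrow> real"
  assumes A_B: "\<forall>\<epsilon>>0. \<forall>\<^sub>F e in F. \<forall>x\<in>X. \<forall>j\<in>J. P e j \<longrightarrow> \<bar>A e x j - B e x\<bar> < \<epsilon>"
    and B_B: "\<forall>\<epsilon>>0. \<forall>\<^sub>F e in F. \<forall>x1\<in>X. \<forall>x2\<in>X. \<bar>B e x1 - B e x2\<bar> < \<epsilon>"
  shows "\<forall>\<delta>>0. \<forall>\<^sub>F e in F. \<forall>x1\<in>X. \<forall>x2\<in>X. \<forall>j1\<in>J. \<forall>j2\<in>J.
           P e j1 \<longrightarrow> P e j2 \<longrightarrow> \<bar>A e x1 j1 - A e x2 j2\<bar> < \<delta>"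
proof (intro allI impI)
  fix \<delta> :: real
  assume "0 < \<delta>"
  then have "0 < \<delta> / 3"
    by simp
  have "\<forall>\<^sub>F e in F. \<forall>x\<in>X. \<forall>j\<in>J. P e j \<longrightarrow> \<bar>A e x j - B e x\<bar> < \<delta> / 3"
    using A_B \<open>0 < \<delta> / 3\<close> by blast
  moreover have "\<forall>\<^sub>F e in F. \<forall>x1\<in>X. \<forall>x2\<in>X. \<bar>B e x1 - B e x2\<bar> < \<delta> / 3"
    using B_B \<open>0 < \<delta> / 3\<close> by blast
  ultimately show "\<forall>\<^sub>F e in F. \<forall>x1\<in>X. \<forall>x2\<in>X. \<forall>j1\<in>J. \<forall>j2\<in>J.
      P e j1 \<longrightarrow> P e j2 \<longrightarrow> \<bar>A e x1 j1 - A e x2 j2\<bar> < \<delta>"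
  proof eventually_elim
    case (elim e)
    show ?case
    proof (intro ballI impI)
      fix x1 x2 j1 j2
      assume "x1 \<in> X" "x2 \<in> X" "j1 \<in> J" "j2 \<in> J" "P e j1" "P e j2"
      then show "\<bar>A e x1 j1 - A e x2 j2\<bar> < \<delta>"
        using elim(1)[rule_format, of x1 j1] elim(1)[rule_format, of x2 j2] elim(2)[rule_format, of x1 x2]
        by linarith
    qed
  qed
qed

lemma measurable_fst_borel:
  "fst \<in> borel_measurable (borel :: ('a::topological_space \<times> 'b::topological_space) measure)"
  by (intro borel_measurable_continuous_onI continuous_intros)

lemma measurable_snd_borel:
  "snd \<in> borel_measurable (borel :: ('a::topological_space \<times> 'b::topological_space) measure)"
  by (intro borel_measurable_continuous_onI continuous_intros)

lemma sets_kernel_borel: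
  assumes "K \<in> borel \<rightarrow>\<^sub>M subprob_algebra borel"
  shows "sets (K x) = sets borel"
  using sets_kernel[OF assms] by simp

lemma measurable_indicator_nonneg_times_scaled:
  fixes f :: "real \<Rightarrow> real"
  assumes f: "continuous_on {0..} f" and \<tau>: "0 < \<tau>"
  shows "(\<lambda>t. indicator {0..} t * f (t / \<tau>)) \<in> borel_measurable borel"
proof -
  have "(\<lambda>s. indicator {0..} s *\<^sub>R f s) \<in> borel_measurable borel"
    by (rule borel_measurable_continuous_on_indicator) (simp_all add: f)
  then have "(\<lambda>t. indicator {0..} (t / \<tau>) *\<^sub>R f (t / \<tau>)) \<in> borel_measurable borel"
    by (rule measurable_compose[rotated]) simp
  moreover have "indicator {0..} (t / \<tau>) = (indicator {0..} t :: real)" for t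
    using \<tau> by (simp add: indicator_def zero_le_divide_iff)
  ultimately show ?thesis
    by simp
qed

lemma measurable_Pk:
  fixes Q :: "real \<Rightarrow> 'a::topological_space \<Rightarrow> ('a \<times> real) measure"
  assumes Q: "Q e \<in> borel \<rightarrow>\<^sub>M subprob_algebra borel" and B: "B \<in> sets borel"
  shows "(\<lambda>y. Pk Q e y B) \<in> borel_measurable borel"
  unfolding Pk_def measure_def
  by (intro borel_measurable_enn2real measurable_compose[OF Q measurable_emeasure_subprob_algebra]
      borel_Times B) simp

lemma measurable_Pk_fst:
  fixes Q :: "real \<Rightarrow> 'a::topological_space \<Rightarrow> ('a \<times> real) measure"
  assumes "Q e \<in> borel \<rightarrow>\<^sub>M subprob_algebra borel" and "B \<in> sets borel"
  shows "(\<lambda>z::'a \<times> 'b::topological_space. Pk Q e (fst z) B) \<in> borel_measurable borel"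
  by (rule measurable_compose[OF measurable_fst_borel measurable_Pk[of Q e, OF assms]])

lemma Pk_nonneg: "0 \<le> Pk Q e x B"
  unfolding Pk_def by simp

lemma sets_Qbar: "sets (Qbar M S Q e (x, j)) = sets borel"
  unfolding Qbar_def by (simp add: sets_measure_of_conv sets.sigma_sets_eq[of borel, simplified])

lemma emeasure_Qbar:
  fixes Q :: "real \<Rightarrow> 'a::topological_space \<Rightarrow> ('a \<times> real) measure"
  assumes Q: "Q e \<in> borel \<rightarrow>\<^sub>M subprob_algebra borel"
    and S: "\<forall>i\<in>{1..M}. S i \<in> sets borel" "S j \<in> sets borel"
    and E: "E \<in> sets borel"
  shows "emeasure (Qbar M S Q e (x, j)) E = ennreal (1 / Pk Q e x (S j)) *
          (\<integral>\<^sup>+ z. indicator (S j) (fst z) *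
              (\<Sum>k\<in>{1..M}. ennreal (Pk Q e (fst z) (S k)) * indicator E ((fst z, k), snd z))
           \<partial>(Q e x))"
proof -
  define F where "F E z = indicator (S j) (fst z) *
      (\<Sum>k\<in>{1..M}. ennreal (Pk Q e (fst z) (S k)) * indicator E ((fst z, k), snd z))"
    for E :: "(('a \<times> nat) \<times> real) set" and z :: "'a \<times> real"
  define \<mu> where "\<mu> E = ennreal (1 / Pk Q e x (S j)) * integral\<^sup>N (Q e x) (F E)" for E
  have F_measurable: "F E \<in> borel_measurable (Q e x)" if E: "E \<in> sets borel" for E
  proof -
    have "(\<lambda>z. ennreal (Pk Q e (fst z) (S k)) * indicator E ((fst z, k), snd z))
        \<in> borel_measurable borel" if "k \<in> {1..M}" for k
    proof -
      have "(\<lambda>z::'a \<times> real. Pk Q e (fst z) (S k)) \<in> borel_measurable borel"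
        by (rule measurable_Pk_fst[of Q e, OF Q]) (use S that in blast)
      moreover have "(\<lambda>z::'a \<times> real. ((fst z, k), snd z)) \<in> borel_measurable borel"
        by (intro borel_measurable_continuous_onI continuous_intros)
      ultimately show ?thesis
        using measurable_compose[OF _ borel_measurable_indicator[OF E]] by measurable
    qed
    then show ?thesis
      unfolding F_def measurable_cong_sets[OF sets_kernel_borel[OF Q] refl]
      using measurable_compose[OF measurable_fst_borel borel_measurable_indicator[OF S(2)]] by measurable
  qed
  have "countably_additive (sets borel) \<mu>"
    unfolding countably_additive_def
  proof (intro allI impI)
    fix A :: "nat \<Rightarrow> (('a \<times> nat) \<times> real) set"
    assume A: "range A \<subseteq> sets borel" "disjoint_family A" "\<Union> (range A) \<in> sets borel"
    have "(\<Sum>i. F (A i) z) = F (\<Union> (range A)) z" for z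
      unfolding F_def ennreal_suminf_cmult
      by (subst suminf_sum) (auto simp: ennreal_suminf_cmult suminf_indicator[OF A(2)])
    then have "(\<Sum>i. integral\<^sup>N (Q e x) (F (A i))) = integral\<^sup>N (Q e x) (F (\<Union> (range A)))"
      using F_measurable A(1) by (subst nn_integral_suminf[symmetric]) auto
    then show "(\<Sum>i. \<mu> (A i)) = \<mu> (\<Union> (range A))"
      unfolding \<mu>_def by simp
  qed
  moreover have "positive (sets borel) \<mu>"
    unfolding positive_def \<mu>_def F_def by simp
  moreover have "Qbar M S Q e (x, j) = measure_of UNIV (sets borel) \<mu>"
    unfolding Qbar_def \<mu>_def F_def by simp
  ultimately show ?thesis
    using emeasure_measure_of_sigma[OF sets.sigma_algebra_axioms[of borel, simplified] _ _ E]
    unfolding \<mu>_def F_def by simp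
qed

lemma emeasure_Qbar_label:
  fixes Q :: "real \<Rightarrow> 'a::topological_space \<Rightarrow> ('a \<times> real) measure"
  assumes Q: "Q e \<in> borel \<rightarrow>\<^sub>M subprob_algebra borel"
    and S: "\<forall>i\<in>{1..M}. S i \<in> sets borel" "S j \<in> sets borel" and d: "d \<in> {1..M}"
    and A: "A \<in> sets borel" "A \<subseteq> (UNIV \<times> {d}) \<times> UNIV"
  shows "emeasure (Qbar M S Q e (x, j)) A =
    (\<integral>\<^sup>+ z. ennreal (indicator (S j) (fst z) * Pk Q e (fst z) (S d) / Pk Q e x (S j)) *
       indicator A ((fst z, d), snd z) \<partial>Q e x)"
proof -
  define w where "w z = indicator (S j) (fst z) * Pk Q e (fst z) (S d)" for z :: "'a \<times> real"
  have w_nonneg: "0 \<le> w z" for z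
    unfolding w_def by (simp add: Pk_nonneg)
  have label_d: "(\<Sum>k\<in>{1..M}. ennreal (Pk Q e (fst z) (S k)) * indicator A ((fst z, k), snd z))
      = ennreal (Pk Q e (fst z) (S d)) * indicator A ((fst z, d), snd z)" for z
  proof -
    have "(\<Sum>k\<in>{1..M}. ennreal (Pk Q e (fst z) (S k)) * indicator A ((fst z, k), snd z)) =
        (\<Sum>k\<in>{1..M}. if k = d then ennreal (Pk Q e (fst z) (S d)) * indicator A ((fst z, d), snd z) else 0)"
      by (rule sum.cong) (use A(2) in \<open>auto simp: indicator_def\<close>)
    then show ?thesis
      using d by simp
  qed
  have "(\<lambda>z. ennreal (w z) * indicator A ((fst z, d), snd z)) \<in> borel_measurable (Q e x)"
  proof -
    have "(\<lambda>z::'a \<times> real. indicator (S j) (fst z) :: real) \<in> borel_measurable borel"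
      by (rule measurable_compose[OF measurable_fst_borel borel_measurable_indicator[OF S(2)]])
    moreover have "(\<lambda>z::'a \<times> real. ((fst z, d), snd z)) \<in> borel_measurable borel"
      by (intro borel_measurable_continuous_onI continuous_intros)
    ultimately show ?thesis
      unfolding w_def measurable_cong_sets[OF sets_kernel_borel[OF Q] refl]
      using measurable_Pk_fst[of Q e, OF Q] S(1) d measurable_compose[OF _ borel_measurable_indicator[OF A(1)]]
      by measurable
  qed
  moreover have "ennreal (w z / Pk Q e x (S j)) = ennreal (1 / Pk Q e x (S j)) * ennreal (w z)" for z
    using w_nonneg by (simp add: ennreal_mult[symmetric] Pk_nonneg)
  ultimately show ?thesis
    unfolding emeasure_Qbar[of Q e, OF Q S A(1)] label_d
    by (simp add: nn_integral_cmult[symmetric] w_def ennreal_mult Pk_nonneg ennreal_indicator mult.assoc)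
qed

lemma integral_Qbar_label:
  fixes Q :: "real \<Rightarrow> 'a::topological_space \<Rightarrow> ('a \<times> real) measure"
    and H :: "('a \<times> nat) \<times> real \<Rightarrow> real"
  assumes Q: "Q e \<in> borel \<rightarrow>\<^sub>M subprob_algebra borel"
    and S: "\<forall>i\<in>{1..M}. S i \<in> sets borel" "S j \<in> sets borel" and d: "d \<in> {1..M}"
    and H: "H \<in> borel_measurable borel" and H_label: "\<And>z. snd (fst z) \<noteq> d \<Longrightarrow> H z = 0"
  shows "(\<integral>z. H z \<partial>Qbar M S Q e (x, j)) = (1 / Pk Q e x (S j)) *
           (\<integral>z. indicator (S j) (fst z) * Pk Q e (fst z) (S d) * H ((fst z, d), snd z) \<partial>Q e x)"
proof -
  define w where "w z = indicator (S j) (fst z) * Pk Q e (fst z) (S d) / Pk Q e x (S j)"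
    for z :: "'a \<times> real"
  define \<phi> where "\<phi> z = ((fst z, d), snd z)" for z :: "'a \<times> real"
  define \<nu> where "\<nu> = distr (density (Q e x) (\<lambda>z. ennreal (w z))) borel \<phi>"
  define C :: "(('a \<times> nat) \<times> real) set" where "C = (UNIV \<times> {d}) \<times> UNIV"
  have sets_Q: "sets (Q e x) = sets borel"
    by (rule sets_kernel_borel[OF Q])
  have C_borel: "C \<in> sets borel"
    unfolding C_def by (intro borel_Times) auto
  have w_measurable: "w \<in> borel_measurable (Q e x)"
  proof -
    have "(\<lambda>z::'a \<times> real. indicator (S j) (fst z) :: real) \<in> borel_measurable borel"
      by (rule measurable_compose[OF measurable_fst_borel borel_measurable_indicator[OF S(2)]])
    then show ?thesis
      unfolding w_def measurable_cong_sets[OF sets_Q refl]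
      using measurable_Pk_fst[of Q e, OF Q] S(1) d by measurable
  qed
  have \<phi>_measurable: "\<phi> \<in> Q e x \<rightarrow>\<^sub>M borel"
    unfolding \<phi>_def measurable_cong_sets[OF sets_Q refl]
    by (intro borel_measurable_continuous_onI continuous_intros)
  have restrict_eq: "restrict_space (Qbar M S Q e (x, j)) C = restrict_space \<nu> C"
  proof (rule measure_eqI)
    show "sets (restrict_space (Qbar M S Q e (x, j)) C) = sets (restrict_space \<nu> C)"
      unfolding \<nu>_def sets_restrict_space by (simp add: sets_Qbar)
  next
    fix A assume "A \<in> sets (restrict_space (Qbar M S Q e (x, j)) C)"
    then have A: "A \<in> sets borel" "A \<subseteq> C"
      using sets_restrict_space_iff[of C "Qbar M S Q e (x, j)" A] C_borel by (auto simp: sets_Qbar)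
    have "emeasure (Qbar M S Q e (x, j)) A = emeasure \<nu> A"
      unfolding emeasure_Qbar_label[of Q e, OF Q S d A(1) A(2)[unfolded C_def]]
        w_def[symmetric] \<phi>_def[symmetric] \<nu>_def
      using w_measurable \<phi>_measurable A(1)
      by (subst emeasure_distr, simp, simp, subst emeasure_density)
        (auto simp: measurable_sets[OF \<phi>_measurable] intro!: nn_integral_cong split: split_indicator)
    then show "emeasure (restrict_space (Qbar M S Q e (x, j)) C) A = emeasure (restrict_space \<nu> C) A"
      using A C_borel by (simp add: emeasure_restrict_space sets_Qbar \<nu>_def)
  qed
  have H_C: "indicator C z * H z = H z" for z
    using H_label[of z] by (cases "snd (fst z) = d") (auto simp: C_def indicator_def mem_Times_iff)
  have "(\<integral>z. H z \<partial>Qbar M S Q e (x, j)) = (\<integral>z. H z \<partial>restrict_space (Qbar M S Q e (x, j)) C)"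
    using C_borel by (subst integral_restrict_space) (auto simp: sets_Qbar H_C)
  also have "\<dots> = (\<integral>z. H z \<partial>\<nu>)"
    using C_borel by (subst restrict_eq, subst integral_restrict_space) (auto simp: \<nu>_def H_C)
  also have "\<dots> = (\<integral>z. w z * H (\<phi> z) \<partial>Q e x)"
    unfolding \<nu>_def using \<phi>_measurable H w_measurable
    by (subst integral_distr, simp, simp, subst integral_density)
      (auto simp: w_def Pk_nonneg measurable_compose[OF \<phi>_measurable H])
  finally show ?thesis
    by (simp add: w_def \<phi>_def)
qed

lemma integral_Qbar_Sbar:
  fixes Q :: "real \<Rightarrow> 'a::topological_space \<Rightarrow> ('a \<times> real) measure"
  assumes Q: "Q e \<in> borel \<rightarrow>\<^sub>M subprob_algebra borel"
    and S: "\<forall>i\<in>{1..M}. S i \<in> sets borel" and b: "b \<in> {1..M}" and d: "d \<in> {1..M}"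
    and g: "(\<lambda>t. indicator {0..} t * g t) \<in> borel_measurable borel"
  shows "(\<integral>z. indicator (Sbar S (b, d) \<times> {0..}) z * g (snd z) \<partial>Qbar M S Q e (y, b)) =
    (1 / Pk Q e y (S b)) * (\<integral>z. indicator (S b \<times> {0..}) z * Pk Q e (fst z) (S d) * g (snd z) \<partial>Q e y)"
proof -
  define H where "H z = indicator ((S b \<times> {d}) \<times> UNIV) z * (indicator {0..} (snd z) * g (snd z))"
    for z :: "('a \<times> nat) \<times> real"
  have H: "H \<in> borel_measurable borel"
  proof -
    have "(S b \<times> {d}) \<times> UNIV \<in> sets (borel :: (('a \<times> nat) \<times> real) measure)"
      using S b by (intro borel_Times) auto
    then show ?thesis
      unfolding H_def using measurable_compose[OF measurable_snd_borel g] by measurable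
  qed
  have "(\<integral>z. H z \<partial>Qbar M S Q e (y, b)) = (1 / Pk Q e y (S b)) *
      (\<integral>z. indicator (S b) (fst z) * Pk Q e (fst z) (S d) * H ((fst z, d), snd z) \<partial>Q e y)"
    by (rule integral_Qbar_label[of Q e, OF Q S(1) _ d H]) (use S b in \<open>auto simp: H_def\<close>)
  moreover have "H = (\<lambda>z. indicator (Sbar S (b, d) \<times> {0..}) z * g (snd z))"
    by (auto simp: fun_eq_iff H_def Sbar_def indicator_def)
  moreover have "(\<lambda>z. indicator (S b) (fst z) * Pk Q e (fst z) (S d) * H ((fst z, d), snd z)) =
      (\<lambda>z. indicator (S b \<times> {0..}) z * Pk Q e (fst z) (S d) * g (snd z))"
    by (auto simp: fun_eq_iff H_def indicator_def)
  ultimately show ?thesis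
    by simp
qed

lemma ET_Qbar_Sbar:
  fixes Q :: "real \<Rightarrow> 'a::topological_space \<Rightarrow> ('a \<times> real) measure"
  assumes Q: "Q e \<in> borel \<rightarrow>\<^sub>M subprob_algebra borel"
    and S: "\<forall>i\<in>{1..M}. S i \<in> sets borel" and b: "b \<in> {1..M}" and d: "d \<in> {1..M}"
    and pos: "0 < Pk Q e y (S b)"
    and g: "(\<lambda>t. indicator {0..} t * g t) \<in> borel_measurable borel"
  shows "ET (Qbar M S Q) e (y, b) (Sbar S (b, d)) g =
    (\<integral>z. indicator (S b \<times> {0..}) z * Pk Q e (fst z) (S d) * g (snd z) \<partial>Q e y) /
    (\<integral>z. indicator (S b \<times> {0..}) z * Pk Q e (fst z) (S d) \<partial>Q e y)"
proof -
  have "Pk (Qbar M S Q) e (y, b) (Sbar S (b, d)) =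
      (\<integral>z. indicator (Sbar S (b, d) \<times> {0..}) z * 1 \<partial>Qbar M S Q e (y, b))"
    using sets_eq_imp_space_eq[OF sets_Qbar[of M S Q e y b]] by (simp add: Pk_def)
  also have "\<dots> = (1 / Pk Q e y (S b)) *
      (\<integral>z. indicator (S b \<times> {0..}) z * Pk Q e (fst z) (S d) \<partial>Q e y)"
    using integral_Qbar_Sbar[of Q e, OF Q S b d, where g = "\<lambda>_. 1"] by simp
  finally show ?thesis
    unfolding ET_def integral_Qbar_Sbar[of Q e, OF Q S b d g] using pos by simp
qed

lemma ET_Qbar_Sbar_close_ET:
  fixes Q :: "real \<Rightarrow> 'a::topological_space \<Rightarrow> ('a \<times> real) measure"
  assumes Q: "Q e \<in> borel \<rightarrow>\<^sub>M subprob_algebra borel"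
    and S: "\<forall>i\<in>{1..M}. S i \<in> sets borel" and b: "b \<in> {1..M}" and d: "d \<in> {1..M}"
    and pos: "0 < Pk Q e y (S b)"
    and p: "0 < p" and \<eta>: "0 \<le> \<eta>" "\<eta> \<le> 1/2"
    and P_close: "\<forall>z\<in>S b. \<bar>Pk Q e z (S d) - p\<bar> \<le> \<eta> * p"
    and g: "(\<lambda>t. indicator {0..} t * g t) \<in> borel_measurable borel"
    and g_bound: "\<forall>t\<ge>0. \<bar>g t\<bar> \<le> K"
  shows "\<bar>ET (Qbar M S Q) e (y, b) (Sbar S (b, d)) g - ET Q e y (S b) g\<bar> \<le> 4 * \<eta> * K"
proof -
  interpret subprob_space "Q e y"
    using subprob_space_kernel[OF Q] by simp
  have sets_Q: "sets (Q e y) = sets borel"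
    by (rule sets_kernel_borel[OF Q])
  have A: "S b \<times> {0..} \<in> sets (Q e y)"
    unfolding sets_Q using S b by (intro borel_Times) auto
  have w: "(\<lambda>z. Pk Q e (fst z) (S d)) \<in> borel_measurable (Q e y)"
    unfolding measurable_cong_sets[OF sets_Q refl]
    by (rule measurable_Pk_fst[of Q e, OF Q]) (use S d in blast)
  have "(\<lambda>z. indicator (S b \<times> {0..}) z * (indicator {0..} (snd z) * g (snd z))) \<in> borel_measurable (Q e y)"
    using A measurable_compose[OF measurable_snd_borel g] unfolding sets_Q
    by (measurable; simp add: measurable_cong_sets[OF sets_Q refl])
  then have h: "(\<lambda>z. indicator (S b \<times> {0..}) z * g (snd z)) \<in> borel_measurable (Q e y)"
    by (rule measurable_cong[THEN iffD1, rotated]) (auto simp: indicator_def)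
  have "\<bar>(\<integral>z. indicator (S b \<times> {0..}) z * Pk Q e (fst z) (S d) * g (snd z) \<partial>Q e y) /
           (\<integral>z. indicator (S b \<times> {0..}) z * Pk Q e (fst z) (S d) \<partial>Q e y) -
         (\<integral>z. indicator (S b \<times> {0..}) z * g (snd z) \<partial>Q e y) / measure (Q e y) (S b \<times> {0..})\<bar>
      \<le> 4 * \<eta> * K"
    using pos P_close g_bound
    by (intro weighted_average_close[OF A _ w h p \<eta>]) (auto simp: Pk_def)
  then show ?thesis
    unfolding ET_Qbar_Sbar[of Q e, OF Q S b d pos g] by (simp add: ET_def Pk_def)
qed

lemma eventually_ET_Qbar_close_ET:
  fixes Q :: "real \<Rightarrow> 'a::topological_space \<Rightarrow> ('a \<times> real) measure"
    and g :: "real \<Rightarrow> real \<Rightarrow> real"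
  assumes Q: "\<forall>e>0. Q e \<in> borel \<rightarrow>\<^sub>M subprob_algebra borel"
    and S: "\<forall>i\<in>{1..M}. S i \<in> sets borel" and b: "b \<in> {1..M}"
    and pos: "\<forall>e>0. \<forall>y\<in>S a. 0 < Pk Q e y (S b)"
    and P_conv: "\<forall>d\<in>{1..M}. conn Pij b d \<longrightarrow>
      (\<forall>\<eta>>0. \<forall>\<^sub>F e in at_right 0. \<forall>z\<in>S b. \<bar>Pk Q e z (S d) / Pij e b d - 1\<bar> < \<eta>)"
    and g: "\<forall>e>0. (\<lambda>t. indicator {0..} t * g e t) \<in> borel_measurable borel"
    and g_bound: "\<forall>e>0. \<forall>t\<ge>0. \<bar>g e t\<bar> \<le> K"
    and K: "0 < K" and \<epsilon>: "0 < \<epsilon>"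
  shows "\<forall>\<^sub>F e in at_right 0. \<forall>x\<in>Sbar S (a, b). \<forall>j\<in>Sbar_idx M Pij. 0 < Pbar Pij e (a, b) j \<longrightarrow>
           \<bar>ET (Qbar M S Q) e x (Sbar S j) (g e) - ET Q e (fst x) (S b) (g e)\<bar> < \<epsilon>"
proof -
  define \<eta> where "\<eta> = min (1/2) (\<epsilon> / (8 * K))"
  have \<eta>: "0 < \<eta>" "\<eta> \<le> 1/2" "4 * \<eta> * K < \<epsilon>"
    using K \<epsilon> by (auto simp: \<eta>_def min_def field_simps)
  have "\<forall>\<^sub>F e in at_right 0. \<forall>d\<in>{1..M}. conn Pij b d \<longrightarrow>
      (\<forall>z\<in>S b. \<bar>Pk Q e z (S d) / Pij e b d - 1\<bar> < \<eta>)"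
    using P_conv \<eta>(1) by (intro eventually_ball_finite) auto
  moreover have "\<forall>\<^sub>F e in at_right 0. (0::real) < e"
    by (rule eventually_at_right_less)
  ultimately show ?thesis
  proof eventually_elim
    case (elim e)
    show ?case
    proof (intro ballI impI)
      fix x j
      assume "x \<in> Sbar S (a, b)" and "j \<in> Sbar_idx M Pij" "0 < Pbar Pij e (a, b) j"
      then obtain y where x: "x = (y, b)" "y \<in> S a"
        by (auto simp: Sbar_def)
      obtain d where j: "j = (b, d)" and d: "d \<in> {1..M}" "conn Pij b d" and p: "0 < Pij e b d"
        using \<open>j \<in> Sbar_idx M Pij\<close> \<open>0 < Pbar Pij e (a, b) j\<close>
        by (cases j) (auto simp: Sbar_idx_def Pbar_def split: if_splits)
      have "\<bar>Pk Q e z (S d) - Pij e b d\<bar> \<le> \<eta> * Pij e b d" if "z \<in> S b" for z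
      proof -
        have "\<bar>Pk Q e z (S d) - Pij e b d\<bar> = \<bar>Pk Q e z (S d) / Pij e b d - 1\<bar> * Pij e b d"
          using p by (simp add: divide_simps abs_divide)
        also have "\<dots> \<le> \<eta> * Pij e b d"
          using elim(1) d that p by (intro mult_right_mono) (auto intro: less_imp_le)
        finally show ?thesis .
      qed
      then have "\<bar>ET (Qbar M S Q) e (y, b) (Sbar S (b, d)) (g e) - ET Q e y (S b) (g e)\<bar> \<le> 4 * \<eta> * K"
        using Q pos g g_bound elim(2) x(2) \<eta>
        by (intro ET_Qbar_Sbar_close_ET[of Q e, OF _ S b d(1) _ p]) auto
      with \<eta>(3) show "\<bar>ET (Qbar M S Q) e x (Sbar S j) (g e) - ET Q e (fst x) (S b) (g e)\<bar> < \<epsilon>"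
        unfolding x j by simp
    qed
  qed
qed

theorem corollary4p3:
  fixes M :: nat
    and S :: "nat \<Rightarrow> 'a::metric_space set"
    and Q :: "real \<Rightarrow> 'a \<Rightarrow> ('a \<times> real) measure"
    and Pij :: "real \<Rightarrow> nat \<Rightarrow> nat \<Rightarrow> real"
    and tau :: "real \<Rightarrow> nat \<Rightarrow> nat \<Rightarrow> real"
    and a b :: nat
    and f :: "real \<Rightarrow> real"
  assumes S_borel: "\<forall>i\<in>{1..M}. S i \<in> sets borel"
    and S_disj: "\<forall>i\<in>{1..M}. \<forall>j\<in>{1..M}. i \<noteq> j \<longrightarrow> S i \<inter> S j = {}"
    and S_cover: "(\<Union>i\<in>{1..M}. S i) = UNIV"
    and Q_kernel: "\<forall>e>0. Q e \<in> borel \<rightarrow>\<^sub>M subprob_algebra borel"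
    and Q_prob: "\<forall>e>0. \<forall>x. prob_space (Q e x)"
    and Q_nonneg: "\<forall>e>0. \<forall>x. emeasure (Q e x) (UNIV \<times> {0..}) = 1"
    and no_self: "\<forall>e>0. \<forall>i\<in>{1..M}. \<forall>x\<in>S i. Pk Q e x (S i) = 0"
    and Pii: "\<forall>e>0. \<forall>i\<in>{1..M}. Pij e i i = 0"
    and dichotomy: "\<forall>i\<in>{1..M}. \<forall>j\<in>{1..M}. i \<noteq> j \<longrightarrow>
        (\<forall>e>0. Pij e i j = 0 \<and> (\<forall>x\<in>S i. Pk Q e x (S j) = 0)) \<or>
        ((\<forall>e>0. Pij e i j > 0 \<and> (\<forall>x\<in>S i. Pk Q e x (S j) > 0)) \<and>
         (\<forall>\<delta>>0. \<forall>\<^sub>F e in at_right 0. \<forall>x\<in>S i. \<bar>Pk Q e x (S j) / Pij e i j - 1\<bar> < \<delta>))"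
    and tau_pos: "\<forall>i\<in>{1..M}. \<forall>j\<in>{1..M}. conn Pij i j \<longrightarrow> (\<forall>e>0. tau e i j > 0)"
    and tau_mean: "\<forall>i\<in>{1..M}. \<forall>j\<in>{1..M}. conn Pij i j \<longrightarrow>
        (\<forall>\<delta>>0. \<forall>\<^sub>F e in at_right 0. \<forall>x\<in>S i. \<bar>ET Q e x (S j) (\<lambda>t. t) / tau e i j - 1\<bar> < \<delta>)"
    and T_law: "\<forall>g :: real \<Rightarrow> real. continuous_on {0..} g \<longrightarrow> bounded (g ` {0..}) \<longrightarrow>
        (\<forall>i\<in>{1..M}. \<forall>j\<in>{1..M}. conn Pij i j \<longrightarrow>
          (\<forall>\<delta>>0. \<forall>\<^sub>F e in at_right 0. \<forall>x1\<in>S i. \<forall>x2\<in>S i.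
             \<bar>ET Q e x1 (S j) (\<lambda>t. g (t / tau e i j)) - ET Q e x2 (S j) (\<lambda>t. g (t / tau e i j))\<bar> < \<delta>))"
    and i_idx: "(a, b) \<in> Sbar_idx M Pij"
    and f_cont: "continuous_on {0..} f"
    and f_bdd: "bounded (f ` {0..})"
  shows "\<forall>\<delta>>0. \<forall>\<^sub>F e in at_right 0.
           \<forall>x1\<in>Sbar S (a, b). \<forall>x2\<in>Sbar S (a, b).
           \<forall>j1\<in>Sbar_idx M Pij. \<forall>j2\<in>Sbar_idx M Pij.
             Pbar Pij e (a, b) j1 > 0 \<longrightarrow> Pbar Pij e (a, b) j2 > 0 \<longrightarrow>
             \<bar>ET (Qbar M S Q) e x1 (Sbar S j1) (\<lambda>t. f (t / tau e a b))
              - ET (Qbar M S Q) e x2 (Sbar S j2) (\<lambda>t. f (t / tau e a b))\<bar> < \<delta>"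
proof (rule eventually_uniform_close_via_common_approximant)
  obtain K where K: "0 < K" "\<forall>t\<ge>0. \<bar>f t\<bar> \<le> K"
    using f_bdd unfolding bounded_pos by force
  have ab: "a \<in> {1..M}" "b \<in> {1..M}" "conn Pij a b"
    using i_idx by (auto simp: Sbar_idx_def)
  have connected: "(\<forall>e>0. Pij e i j > 0 \<and> (\<forall>x\<in>S i. Pk Q e x (S j) > 0)) \<and>
      (\<forall>\<eta>>0. \<forall>\<^sub>F e in at_right 0. \<forall>x\<in>S i. \<bar>Pk Q e x (S j) / Pij e i j - 1\<bar> < \<eta>)"
    if "i \<in> {1..M}" "j \<in> {1..M}" "conn Pij i j" for i j
  proof -
    have "i \<noteq> j"
      using that Pii by (auto simp: conn_def)
    then show ?thesis
      using dichotomy that unfolding conn_def by blast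
  qed
  have \<tau>: "\<forall>e>0. 0 < tau e a b"
    using tau_pos ab by blast
  show "\<forall>\<epsilon>>0. \<forall>\<^sub>F e in at_right 0. \<forall>x\<in>Sbar S (a, b). \<forall>j\<in>Sbar_idx M Pij. 0 < Pbar Pij e (a, b) j \<longrightarrow>
      \<bar>ET (Qbar M S Q) e x (Sbar S j) (\<lambda>t. f (t / tau e a b))
       - ET Q e (fst x) (S b) (\<lambda>t. f (t / tau e a b))\<bar> < \<epsilon>"
    using Q_kernel S_borel ab connected[OF ab] connected[OF ab(2)] \<tau> K
    by (intro allI impI eventually_ET_Qbar_close_ET[where g = "\<lambda>e t. f (t / tau e a b)"])
      (auto simp: measurable_indicator_nonneg_times_scaled[OF f_cont])
  show "\<forall>\<epsilon>>0. \<forall>\<^sub>F e in at_right 0. \<forall>x1\<in>Sbar S (a, b). \<forall>x2\<in>Sbar S (a, b).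
      \<bar>ET Q e (fst x1) (S b) (\<lambda>t. f (t / tau e a b)) - ET Q e (fst x2) (S b) (\<lambda>t. f (t / tau e a b))\<bar> < \<epsilon>"
    using T_law[rule_format, OF f_cont f_bdd ab] by (auto simp: Sbar_def elim!: eventually_mono)
qed

end
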